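(* Let $i\in\{1,\dots,d\}$ and $I\subseteq\{1,\dots,d\}$ with $|I|=i$, and let $L_I=\operatorname{span}\{e_k:k\in I\}$. Then, restricting to the coordinates in $I$, $T_d\cap L_I=S\big(\tfrac{1}{d-i+1},1,\dots,1\big)\subseteq\mathbb{R}^I$, where the weight vector has $i+1$ entries.
   Context: $T_d=\operatorname{conv}(-\mathbb{1}_d,e_1,\dots,e_d)\subseteq\mathbb{R}^d$ is the standard terminal simplex. For $\omega=(\omega_0,\dots,\omega_n)\in\mathbb{R}^{n+1}_{>0}$, $S(\omega)=\operatorname{conv}(-\omega_0\mathbb{1}_n,\omega_1e_1,\dots,\omega_ne_n)\subseteq\mathbb{R}^n$. *)

theory Defs
  imports "HOL-Analysis.Analysis"
begin

definition terminal_simplex :: "(real ^ 'n::finite) set" where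
  "terminal_simplex = convex hull (insert (- 1) {axis k 1 | k. True})"

definition coord_subspace :: "'n::finite set \<Rightarrow> (real ^ 'n) set" where
  "coord_subspace I = span {axis k 1 | k. k \<in> I}"

definition ones_on :: "'n::finite set \<Rightarrow> real ^ 'n" where
  "ones_on I = (\<chi> k. if k \<in> I then 1 else 0)"

text \<open>Weighted simplex S(w_0, (w_k)_{k in I}) = conv(-w_0 1_I, w_k e_k (k in I)) in R^I,
  realised inside the coordinate subspace L_I of R^d (R^I identified with L_I).\<close>
definition weighted_simplex_on ::
    "'n::finite set \<Rightarrow> real \<Rightarrow> ('n \<Rightarrow> real) \<Rightarrow> (real ^ 'n) set" where
  "weighted_simplex_on I w0 w =
     convex hull (insert (- (w0 *\<^sub>R ones_on I)) {axis k (w k) | k. k \<in> I})"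

end

theory Submission imports Defs begin

text \<open>
  A point of the simplex S(w) with vertices -w_0 1_I and w_k e_k has barycentric weights l_0, l_k,
  and its coordinates are x_k = l_k w_k - l_0 w_0 on I and 0 off I. So the single offset
  t = l_0 w_0 determines all weights, and S(w) is cut out by x_k + t \<ge> 0 and
  t/w_0 + \<Sum>_k (x_k + t)/w_k = 1 for some t \<ge> 0. The terminal simplex is the case I = everything,
  w = 1. Intersecting it with L_I kills the coordinates off I, each of which still contributes t
  to the sum; these d - i terms together with t give (d - i + 1) t = t/w_0 for
  w_0 = 1/(d - i + 1), which is exactly the equation describing S(w_0, 1, ..., 1) in R^I.
\<close>

lemma convex_hull_image_finite:
  fixes g :: "'i \<Rightarrow> 'a::real_vector"
  assumes "finite A"
  shows "convex hull (g ` A) =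
    {y. \<exists>u. (\<forall>a\<in>A. 0 \<le> u a) \<and> sum u A = 1 \<and> y = (\<Sum>a\<in>A. u a *\<^sub>R g a)}" (is "_ = ?R")
proof
  show "convex hull (g ` A) \<subseteq> ?R"
  proof (rule hull_minimal)
    show "g ` A \<subseteq> ?R"
    proof
      fix y assume "y \<in> g ` A"
      then obtain b where b: "b \<in> A" "y = g b" by auto
      have "(\<Sum>a\<in>A. (if a = b then 1 else 0) *\<^sub>R g a) = (\<Sum>a\<in>A. if a = b then g a else 0)"
        by (intro sum.cong) auto
      also have "\<dots> = g b"
        using assms b(1) by simp
      finally have "(\<Sum>a\<in>A. (if a = b then 1 else 0) *\<^sub>R g a) = g b" .
      then show "y \<in> ?R"
        using assms b by (intro CollectI exI[of _ "\<lambda>a. if a = b then 1 else 0"]) auto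
    qed
    show "convex ?R"
    proof (rule convexI)
      fix x y :: 'a and s t :: real
      assume "x \<in> ?R" "y \<in> ?R" and st: "0 \<le> s" "0 \<le> t" "s + t = 1"
      then obtain u v where u: "\<forall>a\<in>A. 0 \<le> u a" "sum u A = 1" "x = (\<Sum>a\<in>A. u a *\<^sub>R g a)"
        and v: "\<forall>a\<in>A. 0 \<le> v a" "sum v A = 1" "y = (\<Sum>a\<in>A. v a *\<^sub>R g a)"
        by blast
      show "s *\<^sub>R x + t *\<^sub>R y \<in> ?R"
      proof (intro CollectI exI[of _ "\<lambda>a. s * u a + t * v a"] conjI ballI)
        show "0 \<le> s * u a + t * v a" if "a \<in> A" for a
          using u v st that by simp
        show "(\<Sum>a\<in>A. s * u a + t * v a) = 1"
          using u v st by (simp add: sum.distrib flip: sum_distrib_left)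
        show "s *\<^sub>R x + t *\<^sub>R y = (\<Sum>a\<in>A. (s * u a + t * v a) *\<^sub>R g a)"
          by (simp add: u(3) v(3) scaleR_add_left sum.distrib scaleR_right.sum)
      qed
    qed
  qed
  show "?R \<subseteq> convex hull (g ` A)"
  proof clarify
    fix u :: "'i \<Rightarrow> real" assume "\<forall>a\<in>A. 0 \<le> u a" "sum u A = 1"
    then show "(\<Sum>a\<in>A. u a *\<^sub>R g a) \<in> convex hull (g ` A)"
      by (intro convex_sum[OF assms convex_convex_hull]) (auto intro: hull_inc)
  qed
qed

lemma convex_hull_insert_image_finite:
  fixes f :: "'i \<Rightarrow> 'a::real_vector"
  assumes "finite J"
  shows "convex hull (insert p (f ` J)) =
    {y. \<exists>l0 l. 0 \<le> l0 \<and> (\<forall>k\<in>J. 0 \<le> l k) \<and> l0 + sum l J = 1 \<and>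
         y = l0 *\<^sub>R p + (\<Sum>k\<in>J. l k *\<^sub>R f k)}"
proof -
  define g where "g = case_option p f"
  have inj: "inj_on Some J" by simp
  have vertices: "insert p (f ` J) = g ` insert None (Some ` J)"
    by (auto simp: g_def image_image)
  have fin: "finite (insert None (Some ` J))"
    using assms by simp
  have weights: "(\<exists>u. (\<forall>a\<in>insert None (Some ` J). 0 \<le> u a) \<and> sum u (insert None (Some ` J)) = 1 \<and>
                       y = (\<Sum>a\<in>insert None (Some ` J). u a *\<^sub>R g a))
    \<longleftrightarrow> (\<exists>l0 l. 0 \<le> l0 \<and> (\<forall>k\<in>J. 0 \<le> l k) \<and> l0 + sum l J = 1 \<and>
         y = l0 *\<^sub>R p + (\<Sum>k\<in>J. l k *\<^sub>R f k))" (is "?U \<longleftrightarrow> ?L") for y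
  proof
    assume ?U
    then obtain u where "\<forall>a\<in>insert None (Some ` J). 0 \<le> u a" "sum u (insert None (Some ` J)) = 1"
      "y = (\<Sum>a\<in>insert None (Some ` J). u a *\<^sub>R g a)" by blast
    then show ?L
      using assms by (intro exI[of _ "u None"] exI[of _ "u \<circ> Some"])
        (auto simp: sum.reindex[OF inj] g_def)
  next
    assume ?L
    then obtain l0 l where "0 \<le> l0" "\<forall>k\<in>J. 0 \<le> l k" "l0 + sum l J = 1"
      "y = l0 *\<^sub>R p + (\<Sum>k\<in>J. l k *\<^sub>R f k)" by blast
    then show ?U
      using assms by (intro exI[of _ "case_option l0 l"]) (auto simp: sum.reindex[OF inj] g_def o_def)
  qed
  show ?thesis
    unfolding vertices convex_hull_image_finite[OF fin] using weights by blast
qed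

lemma sum_axis_component:
  fixes c :: "'n::finite \<Rightarrow> 'a::comm_monoid_add"
  shows "(\<Sum>k\<in>A. axis k (c k)) $ j = (if j \<in> A then c j else 0)"
proof -
  have "(\<Sum>k\<in>A. axis k (c k)) $ j = (\<Sum>k\<in>A. if k = j then c k else 0)"
    unfolding sum_component by (intro sum.cong) (auto simp: axis_def)
  then show ?thesis
    by (simp add: sum.delta')
qed

lemma scaleR_axis: "c *\<^sub>R axis k (a::'a::real_vector) = axis k (c *\<^sub>R a)"
  by (simp add: vec_eq_iff axis_def)

lemma coord_subspace_eq: "coord_subspace I = {x. \<forall>j. j \<notin> I \<longrightarrow> x $ j = 0}"
proof
  show "coord_subspace I \<subseteq> {x. \<forall>j. j \<notin> I \<longrightarrow> x $ j = 0}"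
    unfolding coord_subspace_def
    by (rule span_minimal) (auto simp: axis_def subspace_def)
  show "{x. \<forall>j. j \<notin> I \<longrightarrow> x $ j = 0} \<subseteq> coord_subspace I"
  proof clarify
    fix x :: "real ^ 'a" assume "\<forall>j. j \<notin> I \<longrightarrow> x $ j = 0"
    then have "x = (\<Sum>k\<in>I. x $ k *\<^sub>R axis k 1)"
      unfolding vec_eq_iff scaleR_axis sum_axis_component by simp
    also have "\<dots> \<in> coord_subspace I"
      unfolding coord_subspace_def by (intro span_sum span_mul span_base) auto
    finally show "x \<in> coord_subspace I" .
  qed
qed

lemma weighted_simplex_vertex_combination_component:
  "(l0 *\<^sub>R - (w0 *\<^sub>R ones_on I) + (\<Sum>k\<in>I. l k *\<^sub>R axis k (w k))) $ j =
     (if j \<in> I then l j * w j - l0 * w0 else 0)"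
  unfolding vector_add_component scaleR_axis sum_axis_component by (simp add: ones_on_def)

lemma ex_nonneg_rescale_iff:
  fixes c :: real
  assumes "0 < c"
  shows "(\<exists>s\<ge>0. P (s * c) s) \<longleftrightarrow> (\<exists>t\<ge>0. P t (t / c))"
proof
  assume "\<exists>s\<ge>0. P (s * c) s"
  then obtain s where "0 \<le> s" "P (s * c) s" by blast
  then show "\<exists>t\<ge>0. P t (t / c)"
    using assms by (intro exI[of _ "s * c"]) simp
next
  assume "\<exists>t\<ge>0. P t (t / c)"
  then obtain t where "0 \<le> t" "P t (t / c)" by blast
  then show "\<exists>s\<ge>0. P (s * c) s"
    using assms by (intro exI[of _ "t / c"]) simp
qed

lemma mem_weighted_simplex_on_iff:
  fixes x :: "real ^ 'n::finite"
  assumes w0: "0 < w0" and w: "\<And>k. k \<in> I \<Longrightarrow> 0 < w k"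
  shows "x \<in> weighted_simplex_on I w0 w \<longleftrightarrow> (\<forall>j. j \<notin> I \<longrightarrow> x $ j = 0) \<and>
    (\<exists>t\<ge>0. (\<forall>j\<in>I. 0 \<le> x $ j + t) \<and> t / w0 + (\<Sum>j\<in>I. (x $ j + t) / w j) = 1)"
proof -
  have "{axis k (w k) |k. k \<in> I} = (\<lambda>k. axis k (w k)) ` I"
    by blast
  then have hull: "x \<in> weighted_simplex_on I w0 w \<longleftrightarrow>
    (\<exists>l0 l. 0 \<le> l0 \<and> (\<forall>k\<in>I. 0 \<le> l k) \<and> l0 + sum l I = 1 \<and>
       x = l0 *\<^sub>R - (w0 *\<^sub>R ones_on I) + (\<Sum>k\<in>I. l k *\<^sub>R axis k (w k)))"
    unfolding weighted_simplex_on_def by (simp add: convex_hull_insert_image_finite)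
  have coordinates: "x = l0 *\<^sub>R - (w0 *\<^sub>R ones_on I) + (\<Sum>k\<in>I. l k *\<^sub>R axis k (w k)) \<longleftrightarrow>
      (\<forall>j. j \<notin> I \<longrightarrow> x $ j = 0) \<and> (\<forall>j\<in>I. l j = (x $ j + l0 * w0) / w j)" for l0 l
  proof -
    have "x $ j = l j * w j - l0 * w0 \<longleftrightarrow> l j = (x $ j + l0 * w0) / w j" if "j \<in> I" for j
      using w[OF that] by (auto simp: field_simps)
    then show ?thesis
      unfolding vec_eq_iff weighted_simplex_vertex_combination_component by auto
  qed
  have nonneg: "0 \<le> (x $ j + l0 * w0) / w j \<longleftrightarrow> 0 \<le> x $ j + l0 * w0" if "j \<in> I" for j l0
    using w[OF that] by (simp add: zero_le_divide_iff)
  have "x \<in> weighted_simplex_on I w0 w \<longleftrightarrow> (\<forall>j. j \<notin> I \<longrightarrow> x $ j = 0) \<and>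
    (\<exists>l0\<ge>0. (\<forall>j\<in>I. 0 \<le> x $ j + l0 * w0) \<and> l0 + (\<Sum>j\<in>I. (x $ j + l0 * w0) / w j) = 1)"
    (is "_ \<longleftrightarrow> ?support \<and> (\<exists>l0\<ge>0. ?P l0)")
  proof
    assume "x \<in> weighted_simplex_on I w0 w"
    then obtain l0 l where "0 \<le> l0" "\<forall>k\<in>I. 0 \<le> l k" "l0 + sum l I = 1" ?support
      "\<forall>j\<in>I. l j = (x $ j + l0 * w0) / w j"
      unfolding hull coordinates by blast
    then show "?support \<and> (\<exists>l0\<ge>0. ?P l0)"
      using nonneg by (intro conjI exI[of _ l0]) (auto cong: sum.cong)
  next
    assume "?support \<and> (\<exists>l0\<ge>0. ?P l0)"
    then obtain l0 where "?support" "0 \<le> l0" "?P l0" by blast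
    then show "x \<in> weighted_simplex_on I w0 w"
      unfolding hull coordinates using nonneg
      by (intro exI[of _ l0] exI[of _ "\<lambda>j. (x $ j + l0 * w0) / w j"]) auto
  qed
  also have "\<dots> \<longleftrightarrow> (\<forall>j. j \<notin> I \<longrightarrow> x $ j = 0) \<and>
    (\<exists>t\<ge>0. (\<forall>j\<in>I. 0 \<le> x $ j + t) \<and> t / w0 + (\<Sum>j\<in>I. (x $ j + t) / w j) = 1)"
    using ex_nonneg_rescale_iff[OF w0,
        of "\<lambda>t l0. (\<forall>j\<in>I. 0 \<le> x $ j + t) \<and> l0 + (\<Sum>j\<in>I. (x $ j + t) / w j) = 1"]
    by simp
  finally show ?thesis .
qed

lemma terminal_simplex_eq_weighted_simplex_on:
  "terminal_simplex = weighted_simplex_on UNIV 1 (\<lambda>_. 1)"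
proof -
  have ones: "ones_on UNIV = 1"
    by (simp add: vec_eq_iff ones_on_def)
  show ?thesis
    unfolding terminal_simplex_def weighted_simplex_on_def ones scaleR_one by simp
qed

lemma mem_terminal_simplex_iff:
  "x \<in> terminal_simplex \<longleftrightarrow> (\<exists>t\<ge>0. (\<forall>j. 0 \<le> x $ j + t) \<and> t + (\<Sum>j\<in>UNIV. x $ j + t) = 1)"
  using mem_weighted_simplex_on_iff[of 1 UNIV "\<lambda>_. 1" x]
  by (simp add: terminal_simplex_eq_weighted_simplex_on)

lemma mem_terminal_simplex_inter_coord_subspace_iff:
  fixes x :: "real ^ 'n::finite"
  shows "x \<in> terminal_simplex \<inter> coord_subspace I \<longleftrightarrow> (\<forall>j. j \<notin> I \<longrightarrow> x $ j = 0) \<and>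
    (\<exists>t\<ge>0. (\<forall>j\<in>I. 0 \<le> x $ j + t) \<and>
       (real (CARD('n) - card I) + 1) * t + (\<Sum>j\<in>I. x $ j + t) = 1)"
proof (cases "\<forall>j. j \<notin> I \<longrightarrow> x $ j = 0")
  case support: True
  have "card (- I) = CARD('n) - card I"
    by (simp add: Compl_eq_Diff_UNIV card_Diff_subset)
  moreover have "(\<Sum>j\<in>UNIV. x $ j + t) = (\<Sum>j\<in>I. x $ j + t) + (\<Sum>j\<in>-I. t)" for t
    using support sum.subset_diff[of I UNIV "\<lambda>j. x $ j + t"] by (simp add: Compl_eq_Diff_UNIV)
  ultimately have total: "t + (\<Sum>j\<in>UNIV. x $ j + t) =
      (real (CARD('n) - card I) + 1) * t + (\<Sum>j\<in>I. x $ j + t)" for t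
    by (simp add: algebra_simps)
  have "(\<forall>j. 0 \<le> x $ j + t) \<longleftrightarrow> (\<forall>j\<in>I. 0 \<le> x $ j + t)" if "0 \<le> t" for t
    using support that by (metis add_0)
  then show ?thesis
    using support by (auto simp: coord_subspace_eq mem_terminal_simplex_iff total)
qed (auto simp: coord_subspace_eq)

theorem corollary5p5:
  fixes I :: "'n::finite set" and i :: nat
  assumes "i \<in> {1..CARD('n)}" and "card I = i"
  shows "terminal_simplex \<inter> coord_subspace I =
         weighted_simplex_on I (1 / real (CARD('n) - i + 1)) (\<lambda>_. 1)"
proof -
  define w0 where "w0 = 1 / real (CARD('n) - i + 1)"
  have w0: "0 < w0" and "t / w0 = (real (CARD('n) - card I) + 1) * t" for t
    unfolding w0_def assms(2) by simp_all
  then have "x \<in> terminal_simplex \<inter> coord_subspace I \<longleftrightarrow> x \<in> weighted_simplex_on I w0 (\<lambda>_. 1)" for x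
    unfolding mem_terminal_simplex_inter_coord_subspace_iff mem_weighted_simplex_on_iff[OF w0 zero_less_one]
    by simp
  then show ?thesis
    unfolding w0_def by blast
qed

end
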